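(* For every ordinal $\alpha$: if $y\in E_{\alpha+1}$ and $x\in y$, then $x\in E_\alpha$.
   Context: Let $\mathrm{fun}(f,a,b)$ be the bounded formula expressing that $f$ is a function from $a$ to $b$: $f\subseteq a\times b\wedge(\forall y\in a)(\exists z\in b)((y,z)\in f)\wedge(\forall y\in a)(\forall z_1,z_2\in b)[((y,z_1)\in f\wedge(y,z_2)\in f)\to z_1=z_2]$, with Kuratowski pairs $(u,v)=\{\{u,v\},\{u\}\}$. The exponentiation hierarchy: $E_0=\emptyset$; $E_1=\{\emptyset\}$; $E_{\alpha+2}=\{X: X\text{ definable over }\langle E_{\alpha+1},\in\rangle\text{ with parameters}\}\cup\{f:\mathrm{fun}(f,a,b)\text{ for some }a,b\in E_\alpha\}$; $E_\lambda=\bigcup_{\beta<\lambda}E_\beta$ for limit $\lambda$; $E_{\lambda+1}=\{X: X\text{ definable over }\langle E_\lambda,\in\rangle\text{ with parameters}\}$ for limit $\lambda$. *)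

theory Defs
  imports Main
begin

text \<open>We work inside a well-founded model of ZF: a type 'v with a membership
relation mem.  First-order formulas in the language {\<in>, =} with de Bruijn variables.\<close>

datatype fm = FMem nat nat | FEq nat nat | FNeg fm | FConj fm fm | FEx fm

fun sat :: "'v set \<Rightarrow> ('v \<Rightarrow> 'v \<Rightarrow> bool) \<Rightarrow> fm \<Rightarrow> (nat \<Rightarrow> 'v) \<Rightarrow> bool" where
  "sat A mem (FMem i j) env = mem (env i) (env j)"
| "sat A mem (FEq i j) env = (env i = env j)"
| "sat A mem (FNeg \<phi>) env = (\<not> sat A mem \<phi> env)"
| "sat A mem (FConj \<phi> \<psi>) env = (sat A mem \<phi> env \<and> sat A mem \<psi> env)"
| "sat A mem (FEx \<phi>) env = (\<exists>x\<in>A. sat A mem \<phi> (case_nat x env))"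

text \<open>A subset S of A is definable over (A, mem) with parameters from A:
variable 0 is the defined element, the other variables are parameters.\<close>
definition definable_subset :: "('v \<Rightarrow> 'v \<Rightarrow> bool) \<Rightarrow> 'v set \<Rightarrow> 'v set \<Rightarrow> bool" where
  "definable_subset mem A S \<longleftrightarrow>
     (\<exists>\<phi> env. (\<forall>i. env i \<in> A) \<and> S = {x\<in>A. sat A mem \<phi> (case_nat x env)})"

definition definable_over :: "('v \<Rightarrow> 'v \<Rightarrow> bool) \<Rightarrow> 'v set \<Rightarrow> 'v \<Rightarrow> bool" where
  "definable_over mem A X \<longleftrightarrow> definable_subset mem A {z. mem z X}"

definition is_empty :: "('v \<Rightarrow> 'v \<Rightarrow> bool) \<Rightarrow> 'v \<Rightarrow> bool" where
  "is_empty mem e \<longleftrightarrow> (\<forall>z. \<not> mem z e)"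

definition is_upair :: "('v \<Rightarrow> 'v \<Rightarrow> bool) \<Rightarrow> 'v \<Rightarrow> 'v \<Rightarrow> 'v \<Rightarrow> bool" where
  "is_upair mem p a b \<longleftrightarrow> (\<forall>z. mem z p \<longleftrightarrow> z = a \<or> z = b)"

definition is_kpair :: "('v \<Rightarrow> 'v \<Rightarrow> bool) \<Rightarrow> 'v \<Rightarrow> 'v \<Rightarrow> 'v \<Rightarrow> bool" where
  "is_kpair mem p u v \<longleftrightarrow>
     (\<exists>c d. is_upair mem c u v \<and> is_upair mem d u u \<and> is_upair mem p c d)"

definition pair_in :: "('v \<Rightarrow> 'v \<Rightarrow> bool) \<Rightarrow> 'v \<Rightarrow> 'v \<Rightarrow> 'v \<Rightarrow> bool" where
  "pair_in mem u v f \<longleftrightarrow> (\<exists>p. mem p f \<and> is_kpair mem p u v)"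

definition is_fun :: "('v \<Rightarrow> 'v \<Rightarrow> bool) \<Rightarrow> 'v \<Rightarrow> 'v \<Rightarrow> 'v \<Rightarrow> bool" where
  "is_fun mem f a b \<longleftrightarrow>
     (\<forall>p. mem p f \<longrightarrow> (\<exists>u v. mem u a \<and> mem v b \<and> is_kpair mem p u v)) \<and>
     (\<forall>y. mem y a \<longrightarrow> (\<exists>z. mem z b \<and> pair_in mem y z f)) \<and>
     (\<forall>y z1 z2. mem y a \<and> mem z1 b \<and> mem z2 b \<and> pair_in mem y z1 f \<and> pair_in mem y z2 f
        \<longrightarrow> z1 = z2)"

definition is_succ :: "('v \<Rightarrow> 'v \<Rightarrow> bool) \<Rightarrow> 'v \<Rightarrow> 'v \<Rightarrow> bool" where
  "is_succ mem s b \<longleftrightarrow> (\<forall>z. mem z s \<longleftrightarrow> mem z b \<or> z = b)"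

definition trans_set :: "('v \<Rightarrow> 'v \<Rightarrow> bool) \<Rightarrow> 'v \<Rightarrow> bool" where
  "trans_set mem x \<longleftrightarrow> (\<forall>y z. mem z y \<longrightarrow> mem y x \<longrightarrow> mem z x)"

text \<open>Ordinal (in the presence of foundation): transitive set of transitive sets.\<close>
definition is_ordinal :: "('v \<Rightarrow> 'v \<Rightarrow> bool) \<Rightarrow> 'v \<Rightarrow> bool" where
  "is_ordinal mem x \<longleftrightarrow> trans_set mem x \<and> (\<forall>y. mem y x \<longrightarrow> trans_set mem y)"

text \<open>Axioms of ZF (foundation follows from external well-foundedness, assumed separately).\<close>
definition ZF_model :: "('v \<Rightarrow> 'v \<Rightarrow> bool) \<Rightarrow> bool" where
  "ZF_model mem \<longleftrightarrow>
     (\<forall>x y. (\<forall>z. mem z x \<longleftrightarrow> mem z y) \<longrightarrow> x = y) \<and>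
     (\<forall>a b. \<exists>p. is_upair mem p a b) \<and>
     (\<forall>x. \<exists>u. \<forall>z. mem z u \<longleftrightarrow> (\<exists>y. mem y x \<and> mem z y)) \<and>
     (\<forall>x. \<exists>p. \<forall>z. mem z p \<longleftrightarrow> (\<forall>w. mem w z \<longrightarrow> mem w x)) \<and>
     (\<exists>I. (\<exists>e. mem e I \<and> is_empty mem e) \<and>
          (\<forall>y. mem y I \<longrightarrow> (\<exists>s. mem s I \<and> is_succ mem s y))) \<and>
     (\<forall>\<phi> env x. \<exists>s. \<forall>z. mem z s \<longleftrightarrow> mem z x \<and> sat UNIV mem \<phi> (case_nat z env)) \<and>
     (\<forall>\<phi> env x. (\<forall>u. mem u x \<longrightarrow> (\<exists>!v. sat UNIV mem \<phi> (case_nat v (case_nat u env))))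
        \<longrightarrow> (\<exists>r. \<forall>v. mem v r \<longleftrightarrow>
                (\<exists>u. mem u x \<and> sat UNIV mem \<phi> (case_nat v (case_nat u env)))))"

definition E_step :: "('v \<Rightarrow> 'v \<Rightarrow> bool) \<Rightarrow> ('v \<Rightarrow> 'v set) \<Rightarrow> 'v \<Rightarrow> 'v set" where
  "E_step mem R a =
    (if is_empty mem a then {}
     else if (\<exists>b. is_succ mem a b) then
       (let b = (THE b. is_succ mem a b) in
        if is_empty mem b then {e. is_empty mem e}
        else if (\<exists>c. is_succ mem b c) then
          (let c = (THE c. is_succ mem b c) in
           {X. definable_over mem (R b) X} \<union>
           {f. \<exists>x y. x \<in> R c \<and> y \<in> R c \<and> is_fun mem f x y})
        else {X. definable_over mem (R b) X})
     else (\<Union>b\<in>{b. mem b a}. R b))"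

definition E :: "('v \<Rightarrow> 'v \<Rightarrow> bool) \<Rightarrow> 'v \<Rightarrow> 'v set" where
  "E mem = wfrec ({(x, y). mem x y}\<^sup>+) (E_step mem)"

end

theory Submission
  imports Defs
begin

text \<open>
  Induction on \<open>\<alpha>\<close>, using two facts proved by the same kind of induction: every \<open>E(\<gamma>)\<close> is
  transitive, and \<open>E(\<beta>) \<subseteq> E(\<gamma>)\<close> for \<open>\<beta> < \<gamma>\<close>.
  A member of \<open>E(\<alpha>+1)\<close> is either definable over \<open>E(\<alpha>)\<close>, hence a subset of \<open>E(\<alpha>)\<close>, or a
  function \<open>f \<subseteq> a \<times> b\<close> with \<open>a, b \<in> E(\<beta>)\<close> where \<open>\<alpha> = \<beta>+1\<close>; then each \<open>x \<in> f\<close> is a pair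
  \<open>(u, v)\<close> with \<open>u \<in> a\<close>, \<open>v \<in> b\<close>. If \<open>\<beta> = \<gamma>+1\<close>, the induction hypothesis puts \<open>u, v\<close> into
  \<open>E(\<gamma>)\<close>, so \<open>{u, v}, {u} \<in> E(\<beta>)\<close> and \<open>(u, v) \<in> E(\<alpha>)\<close>, all by definability. If \<open>\<beta>\<close> is a
  limit, transitivity and monotonicity put \<open>u, v\<close> into a common \<open>E(\<delta>)\<close> with \<open>\<delta> < \<beta>\<close>, and the
  same argument runs with \<open>E(\<delta>+1) \<subseteq> E(\<beta>)\<close> in place of \<open>E(\<beta>)\<close>.
\<close>

locale wf_ZF_model =
  fixes mem :: "'v \<Rightarrow> 'v \<Rightarrow> bool"
  assumes wf_mem: "wf {(u, v). mem u v}"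
    and ZF: "ZF_model mem"
begin

lemma extensionality: "(\<And>z. mem z x \<longleftrightarrow> mem z y) \<Longrightarrow> x = y"
  using ZF[unfolded ZF_model_def, THEN conjunct1] by blast

lemma upair_exists: "\<exists>p. is_upair mem p a b"
  using ZF[unfolded ZF_model_def, THEN conjunct2, THEN conjunct1] by blast

lemma union_exists: "\<exists>u. \<forall>z. mem z u \<longleftrightarrow> (\<exists>y. mem y x \<and> mem z y)"
  using ZF[unfolded ZF_model_def, THEN conjunct2, THEN conjunct2, THEN conjunct1] by blast

lemma mem_irrefl: "\<not> mem x x"
  using wf_not_refl[OF wf_mem, of x] by simp

lemma mem_asym: "mem x y \<Longrightarrow> \<not> mem y x"
  using wf_not_sym[OF wf_mem, of x y] by simp

lemma succ_mem: "is_succ mem s b \<Longrightarrow> mem b s"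
  unfolding is_succ_def by blast

lemma succ_not_empty: "is_succ mem s b \<Longrightarrow> \<not> is_empty mem s"
  unfolding is_succ_def is_empty_def by blast

lemma succ_unique: "is_succ mem s b \<Longrightarrow> is_succ mem s b' \<Longrightarrow> b = b'"
  unfolding is_succ_def using mem_asym by metis

lemma the_succ: "is_succ mem s b \<Longrightarrow> (THE b. is_succ mem s b) = b"
  using succ_unique by blast

lemma succ_exists: "\<exists>s. is_succ mem s b"
proof -
  obtain p where p: "is_upair mem p b b" using upair_exists by blast
  obtain q where q: "is_upair mem q b p" using upair_exists by blast
  obtain u where u: "\<forall>z. mem z u \<longleftrightarrow> (\<exists>y. mem y q \<and> mem z y)" using union_exists by blast
  have "is_succ mem u b" unfolding is_succ_def
  proof (intro allI iffI)
    fix z assume "mem z u"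
    then obtain w where w: "mem w q" "mem z w" using u by blast
    have "w = b \<or> w = p" using w(1) q unfolding is_upair_def by blast
    then show "mem z b \<or> z = b" using w(2) p unfolding is_upair_def by blast
  next
    fix z assume "mem z b \<or> z = b"
    moreover have "mem b q" "mem p q" "mem b p" using p q unfolding is_upair_def by blast+
    ultimately show "mem z u" using u by blast
  qed
  then show ?thesis ..
qed

lemma empty_succ_limit_cases:
  obtains "is_empty mem a"
  | b where "is_succ mem a b"
  | "\<not> is_empty mem a" "\<nexists>b. is_succ mem a b"
  by blast

subsection \<open>Ordinals\<close>

abbreviation "Ord \<equiv> is_ordinal mem"

lemma Ord_mem: "Ord x \<Longrightarrow> mem y x \<Longrightarrow> Ord y"
  unfolding is_ordinal_def trans_set_def by blast

lemma Ord_mem_trans: "Ord x \<Longrightarrow> mem y x \<Longrightarrow> mem z y \<Longrightarrow> mem z x"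
  unfolding is_ordinal_def trans_set_def by blast

lemma Ord_succ: "Ord b \<Longrightarrow> is_succ mem s b \<Longrightarrow> Ord s"
  unfolding is_ordinal_def trans_set_def is_succ_def by blast

lemma Ord_linear: "Ord x \<Longrightarrow> Ord y \<Longrightarrow> mem x y \<or> x = y \<or> mem y x"
proof (induction x arbitrary: y rule: wf_induct_rule[OF wf_mem])
  case (1 x)
  note IH_x = "1.IH"
  show ?case using \<open>Ord y\<close>
  proof (induction y rule: wf_induct_rule[OF wf_mem])
    case (1 y)
    show ?case
    proof (rule ccontr)
      assume incomparable: "\<not> (mem x y \<or> x = y \<or> mem y x)"
      have "mem z x \<longleftrightarrow> mem z y" for z
      proof
        assume "mem z x"
        with IH_x[of z y] Ord_mem[OF \<open>Ord x\<close>] \<open>Ord y\<close> have "mem z y \<or> z = y \<or> mem y z"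
          by blast
        with incomparable \<open>mem z x\<close> \<open>Ord x\<close> show "mem z y"
          using Ord_mem_trans by blast
      next
        assume "mem z y"
        with "1.IH"[of z] Ord_mem[OF \<open>Ord y\<close>] have "mem x z \<or> x = z \<or> mem z x"
          by blast
        with incomparable \<open>mem z y\<close> \<open>Ord y\<close> show "mem z x"
          using Ord_mem_trans by blast
      qed
      with extensionality incomparable show False by blast
    qed
  qed
qed

lemma limit_succ_mem:
  assumes "Ord a" "\<nexists>b. is_succ mem a b" "mem b a" "is_succ mem s b"
  shows "mem s a"
proof -
  have "Ord s" using assms Ord_mem Ord_succ by blast
  then have "mem s a \<or> s = a \<or> mem a s" using Ord_linear \<open>Ord a\<close> by blast
  moreover have "s \<noteq> a" using assms by blast
  moreover have "\<not> mem a s" using assms(3,4) mem_asym mem_irrefl unfolding is_succ_def by blast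
  ultimately show ?thesis by blast
qed

abbreviation "mem_trancl \<equiv> {(u, v). mem u v}\<^sup>+"

lemma E_step_cong:
  assumes "\<And>x. (x, a) \<in> mem_trancl \<Longrightarrow> F x = G x"
  shows "E_step mem F a = E_step mem G a"
proof -
  have mem_eq: "\<And>x. mem x a \<Longrightarrow> F x = G x"
    by (rule assms, rule r_into_trancl) simp
  show ?thesis
  proof (cases a rule: empty_succ_limit_cases)
    case (2 b)
    have "F b = G b" using mem_eq[OF succ_mem[OF 2]] .
    moreover have "F c = G c" if c: "is_succ mem b c" for c
    proof (rule assms)
      show "(c, a) \<in> mem_trancl"
        using succ_mem[OF c] succ_mem[OF 2] by (intro trancl_into_trancl2[OF _ r_into_trancl]) simp_all
    qed
    ultimately show ?thesis
      using 2 by (auto simp: E_step_def the_succ Let_def)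
  qed (use mem_eq in \<open>auto simp: E_step_def\<close>)
qed

lemma E_unfold: "E mem a = E_step mem (E mem) a"
proof -
  have "E mem a = E_step mem (cut (E mem) mem_trancl a) a"
    unfolding E_def by (rule wfrec[OF wf_trancl[OF wf_mem]])
  also have "\<dots> = E_step mem (E mem) a"
    by (rule E_step_cong) (simp add: cut_apply)
  finally show ?thesis .
qed

lemma E_empty: "is_empty mem a \<Longrightarrow> E mem a = {}"
  by (subst E_unfold) (simp add: E_step_def)

lemma E_limit:
  "\<not> is_empty mem a \<Longrightarrow> \<nexists>b. is_succ mem a b \<Longrightarrow> E mem a = (\<Union>b\<in>{b. mem b a}. E mem b)"
  by (subst E_unfold) (auto simp: E_step_def)

lemma E_succ_empty:
  "is_succ mem s b \<Longrightarrow> is_empty mem b \<Longrightarrow> E mem s = {e. is_empty mem e}"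
  by (subst E_unfold) (auto simp: E_step_def the_succ succ_not_empty)

lemma E_succ_succ:
  assumes "is_succ mem s b" "is_succ mem b c"
  shows "E mem s = {X. definable_over mem (E mem b) X} \<union>
    {f. \<exists>x y. x \<in> E mem c \<and> y \<in> E mem c \<and> is_fun mem f x y}"
  using assms by (subst E_unfold) (auto simp: E_step_def the_succ succ_not_empty Let_def)

lemma E_succ_limit:
  "is_succ mem s b \<Longrightarrow> \<not> is_empty mem b \<Longrightarrow> \<nexists>c. is_succ mem b c \<Longrightarrow>
    E mem s = {X. definable_over mem (E mem b) X}"
  by (subst E_unfold) (auto simp: E_step_def the_succ succ_not_empty)

lemma mem_E_succE:
  assumes "is_succ mem s b" "y \<in> E mem s"
  obtains "is_empty mem y"
  | "definable_over mem (E mem b) y"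
  | c a a' where "is_succ mem b c" "a \<in> E mem c" "a' \<in> E mem c" "is_fun mem y a a'"
proof (cases b rule: empty_succ_limit_cases)
  case 1
  then show ?thesis using that assms E_succ_empty by blast
next
  case (2 c)
  then show ?thesis using that assms E_succ_succ[OF assms(1) 2] by blast
next
  case 3
  then show ?thesis using that assms E_succ_limit[OF assms(1)] by blast
qed

lemma definable_over_subset: "definable_over mem A X \<Longrightarrow> mem z X \<Longrightarrow> z \<in> A"
  unfolding definable_over_def definable_subset_def by blast

lemma definable_over_self:
  assumes "\<And>z. mem z y \<Longrightarrow> z \<in> A" "y \<in> A"
  shows "definable_over mem A y"
  unfolding definable_over_def definable_subset_def
  by (rule exI[of _ "FMem 0 1"], rule exI[of _ "\<lambda>_. y"]) (use assms in auto)

lemma definable_over_upair: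
  assumes "u \<in> A" "v \<in> A" "is_upair mem p u v"
  shows "definable_over mem A p"
  unfolding definable_over_def definable_subset_def
  by (rule exI[of _ "FNeg (FConj (FNeg (FEq 0 1)) (FNeg (FEq 0 2)))"],
      rule exI[of _ "case_nat u (\<lambda>_. v)"])
    (use assms in \<open>auto simp: is_upair_def split: nat.split\<close>)

lemma definable_mem_E_succ:
  assumes "is_succ mem s b" "definable_over mem (E mem b) X"
  shows "X \<in> E mem s"
proof (cases b rule: empty_succ_limit_cases)
  case 1
  then show ?thesis
    using assms E_succ_empty E_empty definable_over_subset by (fastforce simp: is_empty_def)
qed (use assms E_succ_succ E_succ_limit in auto)

lemma upair_mem_E_succ:
  "is_succ mem s b \<Longrightarrow> u \<in> E mem b \<Longrightarrow> v \<in> E mem b \<Longrightarrow> is_upair mem p u v \<Longrightarrow> p \<in> E mem s"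
  using definable_mem_E_succ definable_over_upair by blast

text \<open>The components \<open>{u, v}, {u}\<close> land in \<open>E(b) \<subseteq> E(d)\<close>; below, \<open>b = d\<close> when \<open>d\<close> is a
  successor and \<open>b = \<delta>+1 < d\<close> when \<open>d\<close> is a limit.\<close>

lemma kpair_mem_E_succ:
  assumes "is_succ mem s d" "is_succ mem b c" "E mem b \<subseteq> E mem d"
    and "u \<in> E mem c" "v \<in> E mem c" "is_kpair mem p u v"
  shows "p \<in> E mem s"
proof -
  obtain q r where "is_upair mem q u v" "is_upair mem r u u" "is_upair mem p q r"
    using \<open>is_kpair mem p u v\<close> unfolding is_kpair_def by blast
  with assms show ?thesis
    using upair_mem_E_succ[OF assms(1)] upair_mem_E_succ[OF assms(2)] by blast
qed

lemma is_fun_memE: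
  assumes "is_fun mem f a b" "mem x f"
  obtains u v where "mem u a" "mem v b" "is_kpair mem x u v"
  using assms unfolding is_fun_def by blast

subsection \<open>Transitivity and monotonicity of the hierarchy\<close>

lemma E_transitive: "Ord g \<Longrightarrow> y \<in> E mem g \<Longrightarrow> mem x y \<Longrightarrow> x \<in> E mem g"
proof (induction g arbitrary: y x rule: wf_induct_rule[OF wf_mem])
  case (1 g)
  have IH: "\<And>h y x. mem h g \<Longrightarrow> y \<in> E mem h \<Longrightarrow> mem x y \<Longrightarrow> x \<in> E mem h"
    using "1.IH" Ord_mem[OF "1.prems"(1)] by blast
  show ?case
  proof (cases g rule: empty_succ_limit_cases)
    case 1
    with "1.prems" E_empty show ?thesis by blast
  next
    case (2 b)
    have "mem b g" using succ_mem[OF 2] .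
    from 2 \<open>y \<in> E mem g\<close> show ?thesis
    proof (cases rule: mem_E_succE)
      case 1
      with \<open>mem x y\<close> show ?thesis by (simp add: is_empty_def)
    next
      case 2
      then have "x \<in> E mem b" using definable_over_subset \<open>mem x y\<close> by blast
      then have "definable_over mem (E mem b) x"
        using IH[OF \<open>mem b g\<close>] by (blast intro: definable_over_self)
      then show ?thesis using definable_mem_E_succ[OF \<open>is_succ mem g b\<close>] by blast
    next
      case (3 c a a')
      obtain u v where uv: "mem u a" "mem v a'" "is_kpair mem x u v"
        using is_fun_memE[OF 3(4) \<open>mem x y\<close>] .
      have "mem c g" using succ_mem[OF 3(1)] \<open>mem b g\<close> Ord_mem_trans "1.prems"(1) by blast
      with IH 3 uv have "u \<in> E mem c" "v \<in> E mem c" by blast+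
      with kpair_mem_E_succ[OF \<open>is_succ mem g b\<close> 3(1)] uv(3) show ?thesis by blast
    qed
  next
    case 3
    with "1.prems"(2) obtain b where "mem b g" "y \<in> E mem b" using E_limit by auto
    with IH "1.prems"(3) E_limit[OF 3] show ?thesis by auto
  qed
qed

lemma E_subset_E_succ:
  assumes "Ord b" "is_succ mem s b"
  shows "E mem b \<subseteq> E mem s"
proof
  fix y assume "y \<in> E mem b"
  then have "definable_over mem (E mem b) y"
    using E_transitive[OF \<open>Ord b\<close>] by (blast intro: definable_over_self)
  then show "y \<in> E mem s" by (rule definable_mem_E_succ[OF assms(2)])
qed

lemma E_mono: "Ord g \<Longrightarrow> mem b g \<Longrightarrow> E mem b \<subseteq> E mem g"
proof (induction g arbitrary: b rule: wf_induct_rule[OF wf_mem])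
  case (1 g)
  show ?case
  proof (cases g rule: empty_succ_limit_cases)
    case 1
    with \<open>mem b g\<close> show ?thesis by (simp add: is_empty_def)
  next
    case (2 h)
    have "Ord h" using Ord_mem "1.prems"(1) succ_mem[OF 2] by blast
    have "mem b h \<or> b = h" using \<open>mem b g\<close> 2 unfolding is_succ_def by blast
    moreover have "mem b h \<Longrightarrow> E mem b \<subseteq> E mem h"
      using "1.IH"[of h b] succ_mem[OF 2] \<open>Ord h\<close> by simp
    ultimately show ?thesis using E_subset_E_succ[OF \<open>Ord h\<close> 2] by blast
  next
    case 3
    with \<open>mem b g\<close> show ?thesis by (auto simp: E_limit)
  qed
qed

lemma limit_E_common_stage:
  assumes "Ord a" "mem b1 a" "mem b2 a" "u \<in> E mem b1" "v \<in> E mem b2"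
  obtains b where "mem b a" "u \<in> E mem b" "v \<in> E mem b"
proof -
  have "Ord b1" "Ord b2" using assms Ord_mem by blast+
  then have "mem b1 b2 \<or> b1 = b2 \<or> mem b2 b1" using Ord_linear by blast
  then show ?thesis using that assms E_mono \<open>Ord b1\<close> \<open>Ord b2\<close> by blast
qed

lemma kpair_mem_E_succ_limit:
  assumes "Ord c" "\<not> is_empty mem c" "\<nexists>d. is_succ mem c d" "is_succ mem a c"
    and "a1 \<in> E mem c" "a2 \<in> E mem c" "mem u a1" "mem v a2" "is_kpair mem p u v"
  shows "p \<in> E mem a"
proof -
  have E_c: "E mem c = (\<Union>b\<in>{b. mem b c}. E mem b)" using E_limit assms(2,3) .
  obtain b1 b2 where "mem b1 c" "a1 \<in> E mem b1" "mem b2 c" "a2 \<in> E mem b2"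
    using assms(5,6) E_c by blast
  with assms(1,7,8) have "u \<in> E mem b1" "v \<in> E mem b2"
    using Ord_mem E_transitive by blast+
  then obtain b where b: "mem b c" "u \<in> E mem b" "v \<in> E mem b"
    using limit_E_common_stage[OF assms(1) \<open>mem b1 c\<close> \<open>mem b2 c\<close>] by blast
  obtain b' where b': "is_succ mem b' b" using succ_exists by blast
  have "E mem b' \<subseteq> E mem c"
    using E_c limit_succ_mem[OF assms(1,3) b(1) b'] by blast
  with kpair_mem_E_succ[OF assms(4) b' _ b(2,3) assms(9)] show ?thesis by blast
qed

lemma mem_mem_E_succ:
  "Ord a \<Longrightarrow> is_succ mem s a \<Longrightarrow> y \<in> E mem s \<Longrightarrow> mem x y \<Longrightarrow> x \<in> E mem a"
proof (induction a arbitrary: s y x rule: wf_induct_rule[OF wf_mem])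
  case (1 a)
  from "1.prems"(2,3) show ?case
  proof (cases rule: mem_E_succE)
    case 1
    with \<open>mem x y\<close> show ?thesis by (simp add: is_empty_def)
  next
    case 2
    with \<open>mem x y\<close> show ?thesis using definable_over_subset by blast
  next
    case (3 c a1 a2)
    obtain u v where uv: "mem u a1" "mem v a2" "is_kpair mem x u v"
      using is_fun_memE[OF 3(4) \<open>mem x y\<close>] .
    have "mem c a" using succ_mem[OF 3(1)] .
    then have "Ord c" using Ord_mem "1.prems"(1) by blast
    show ?thesis
    proof (cases c rule: empty_succ_limit_cases)
      case 1
      with 3 show ?thesis using E_empty by blast
    next
      case (2 d)
      have "mem d a" using succ_mem[OF 2] \<open>mem c a\<close> Ord_mem_trans "1.prems"(1) by blast
      with "1.IH"[of d] Ord_mem[OF \<open>Ord c\<close> succ_mem[OF 2]] 2 3 uv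
      have "u \<in> E mem d" "v \<in> E mem d" by blast+
      with kpair_mem_E_succ[OF 3(1) 2] uv(3) show ?thesis by blast
    next
      case 3
      show ?thesis
        by (rule kpair_mem_E_succ_limit[OF \<open>Ord c\<close> 3 \<open>is_succ mem a c\<close>
              \<open>a1 \<in> E mem c\<close> \<open>a2 \<in> E mem c\<close> uv])
    qed
  qed
qed

end

theorem lemma4p2:
  fixes mem :: "'v \<Rightarrow> 'v \<Rightarrow> bool" and \<alpha> s x y :: 'v
  assumes "wf {(u, v). mem u v}"
    and "ZF_model mem"
    and "is_ordinal mem \<alpha>"
    and "is_succ mem s \<alpha>"
    and "y \<in> E mem s"
    and "mem x y"
  shows "x \<in> E mem \<alpha>"
proof -
  interpret wf_ZF_model mem using assms(1,2) by unfold_locales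
  show ?thesis using mem_mem_E_succ assms(3-6) .
qed

end
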